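(* Let $\mu$ be a probability measure supported on a symmetric convex domain $\Omega\subset\mathbb R^n$ with $\int_\Omega|x|\,d\mu(x)<+\infty$. Suppose that for some $\kappa>0$, $$\mathrm{Ent}_\mu(f)\le\frac1\kappa\int_\Omega\Phi_f\,d\mu\quad\text{for all }f\in\mathrm{QC}^1(\Omega,\mu).$$ Then $\mu$ satisfies the dilation inequality for $\mathcal K_s^n(\Omega)$ with constant $\kappa$.
   Context: Symmetric set: $K=-K$; symmetric function: $f(x)=f(-x)$; quasi-convex: $\{f<\lambda\}$ convex for all $\lambda$. Symmetric convex domain: nonempty open convex $\Omega=-\Omega\subset\mathbb R^n$. $\mathcal K_s^n(\Omega)$: nonempty symmetric open convex subsets of $\Omega$. For Borel $A$, $\varepsilon\in(0,1)$: $A_\varepsilon:=A\cup\{x:\exists y,\ \int_0^1\mathbf 1_A((1-t)x+ty)\,dt>1-\varepsilon\}$; $\mu^*(A):=\liminf_{\varepsilon\downarrow0}(\mu(A_\varepsilon)-\mu(A))/\varepsilon$. Dilation inequality with $\kappa$: $\mu^*(K)\ge-\kappa(1-\mu(K))\log(1-\mu(K))$ for all $K\in\mathcal K_s^n(\Omega)$. $\mathrm{Ent}_\mu(f):=\int f\log f\,d\mu-\int f\,d\mu\log\int f\,d\mu$. $\Phi_f(x):=\limsup_{\varepsilon\downarrow0}\frac{f(x)-f(\frac{1-\varepsilon}{1+\varepsilon}x)}{\varepsilon}$. $\mathrm{QC}(\Omega,\mu)$: all nonnegative, continuous, symmetric quasi-convex $f$ on $\Omega$ for which there exist a nonnegative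 Borel $g\in L^1(\mu)$ and $\varepsilon_0\in(0,1]$ with $\sup_{\varepsilon\in(0,\varepsilon_0)}\frac{f(x)-f(\frac{1-\varepsilon}{1+\varepsilon}x)}{\varepsilon}\le g(x)$ for all $x\in\Omega$. $\mathrm{QC}^p(\Omega,\mu):=\{f:f^p\in\mathrm{QC}(\Omega,\mu)\cap L^1(\mu)\}$. *)

theory Defs
  imports "HOL-Probability.Probability"
begin

definition sym_convex_domain :: "'a::euclidean_space set \<Rightarrow> bool" where
  "sym_convex_domain \<Omega> \<longleftrightarrow> \<Omega> \<noteq> {} \<and> open \<Omega> \<and> convex \<Omega> \<and> uminus ` \<Omega> = \<Omega>"

definition Ks :: "'a::euclidean_space set \<Rightarrow> 'a set set" where
  "Ks \<Omega> = {K. K \<noteq> {} \<and> K \<subseteq> \<Omega> \<and> open K \<and> convex K \<and> uminus ` K = K}"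

definition dilate :: "'a::euclidean_space set \<Rightarrow> real \<Rightarrow> 'a set" where
  "dilate A \<epsilon> = A \<union> {x. \<exists>y. (LINT t:{0..1}|lborel. indicator A ((1 - t) *\<^sub>R x + t *\<^sub>R y)) > 1 - \<epsilon>}"

definition mu_star :: "'a::euclidean_space measure \<Rightarrow> 'a set \<Rightarrow> ereal" where
  "mu_star \<mu> A = Liminf (at_right 0) (\<lambda>\<epsilon>. ereal ((measure \<mu> (dilate A \<epsilon>) - measure \<mu> A) / \<epsilon>))"

text \<open>s log s with the convention 0 log 0 = 0 (only used for s >= 0).\<close>
definition xlogx :: "real \<Rightarrow> real" where
  "xlogx s = (if s \<le> 0 then 0 else s * ln s)"

definition dilation_ineq :: "'a::euclidean_space measure \<Rightarrow> 'a set \<Rightarrow> real \<Rightarrow> bool" where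
  "dilation_ineq \<mu> \<Omega> \<kappa> \<longleftrightarrow>
     (\<forall>K \<in> Ks \<Omega>. mu_star \<mu> K \<ge> ereal (- \<kappa> * xlogx (1 - measure \<mu> K)))"

definition Ent :: "'a::euclidean_space measure \<Rightarrow> 'a set \<Rightarrow> ('a \<Rightarrow> real) \<Rightarrow> ereal" where
  "Ent \<mu> \<Omega> f =
     enn2ereal (\<integral>\<^sup>+x\<in>\<Omega>. ennreal (xlogx (f x)) \<partial>\<mu>)
     - enn2ereal (\<integral>\<^sup>+x\<in>\<Omega>. ennreal (- xlogx (f x)) \<partial>\<mu>)
     - ereal (xlogx (LINT x:\<Omega>|\<mu>. f x))"

definition Phi :: "('a::euclidean_space \<Rightarrow> real) \<Rightarrow> 'a \<Rightarrow> ereal" where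
  "Phi f x = Limsup (at_right 0) (\<lambda>\<epsilon>. ereal ((f x - f (((1 - \<epsilon>) / (1 + \<epsilon>)) *\<^sub>R x)) / \<epsilon>))"

definition QC :: "'a::euclidean_space set \<Rightarrow> 'a measure \<Rightarrow> ('a \<Rightarrow> real) set" where
  "QC \<Omega> \<mu> = {f. (\<forall>x\<in>\<Omega>. f x \<ge> 0) \<and> continuous_on \<Omega> f \<and> (\<forall>x\<in>\<Omega>. f (- x) = f x)
      \<and> (\<forall>l. convex {x\<in>\<Omega>. f x < l})
      \<and> (\<exists>g \<epsilon>0. g \<in> borel_measurable borel \<and> (\<forall>x. g x \<ge> 0) \<and> integrable \<mu> g
            \<and> 0 < \<epsilon>0 \<and> \<epsilon>0 \<le> 1
            \<and> (\<forall>x\<in>\<Omega>. \<forall>\<epsilon>\<in>{0<..<\<epsilon>0}. (f x - f (((1 - \<epsilon>) / (1 + \<epsilon>)) *\<^sub>R x)) / \<epsilon> \<le> g x))}"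

definition QC1 :: "'a::euclidean_space set \<Rightarrow> 'a measure \<Rightarrow> ('a \<Rightarrow> real) set" where
  "QC1 \<Omega> \<mu> = {f. f \<in> QC \<Omega> \<mu> \<and> set_integrable \<mu> \<Omega> f}"

end

theory Submission
  imports Defs "HOL-Real_Asymp.Real_Asymp"
begin

text \<open>Fix \<open>K \<in> Ks \<Omega>\<close> with Minkowski gauge \<open>\<rho>\<close> and test the entropy inequality with
  \<open>f\<^sub>\<delta> = min 1 (max 0 ((\<rho> - 1) / (2\<delta>)))\<close>, which vanishes on \<open>K\<close> and equals 1 outside \<open>(1 + 2\<delta>) K\<close>.
  Every \<open>x\<close> with \<open>\<rho> x \<le> 1 + 2\<delta>\<close> lies in the dilation \<open>K\<^sub>\<delta>\<close>: the chord from \<open>x\<close> towards \<open>-x / \<rho> x\<close>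
  spends the fraction \<open>2 / (\<rho> x + 1) > 1 - \<delta>\<close> of its length in \<open>K\<close>. Hence the shell where \<open>f\<^sub>\<delta>\<close> is not
  constant has measure at most \<open>D \<delta> = \<mu> K\<^sub>\<delta> - \<mu> K\<close>; on it \<open>\<Phi>\<^sub>f \<le> (1 + 2\<delta>) / \<delta>\<close> and \<open>|f log f| \<le> 1\<close>,
  while the mean \<open>m\<^sub>\<delta>\<close> of \<open>f\<^sub>\<delta>\<close> lies in \<open>[1 - \<mu> K - D \<delta>, 1 - \<mu> K]\<close>. The entropy inequality thus gives
  \<open>-\<kappa> m\<^sub>\<delta> log m\<^sub>\<delta> \<le> (1 + (2 + \<kappa>) \<delta>) D \<delta> / \<delta>\<close>, and as \<open>\<delta> \<rightarrow> 0\<close> continuity of \<open>s log s\<close> yields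
  \<open>liminf D \<delta> / \<delta> \<ge> -\<kappa> (1 - \<mu> K) log (1 - \<mu> K)\<close>.\<close>

lemma eq_if_same_strict_upper_bounds:
  fixes a b :: real
  assumes "0 \<le> a" "0 \<le> b" "\<And>t. 0 < t \<Longrightarrow> a < t \<longleftrightarrow> b < t"
  shows "a = b"
  using assms(3)[of "(a + b) / 2"] assms(1,2) by (cases a b rule: linorder_cases) auto

lemma isCont_xlogx: "isCont xlogx s"
proof -
  consider "s < 0" | "s = 0" | "0 < s" by linarith
  then show ?thesis
  proof cases
    case 1
    have "eventually (\<lambda>u. xlogx u = 0) (nhds s)"
      using eventually_nhds_in_open[of "{..<0}" s] 1 by (auto elim!: eventually_mono simp: xlogx_def)
    then show ?thesis using isCont_cong[of xlogx "\<lambda>_. 0" s] by simp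
  next
    case 2
    have "eventually (\<lambda>u. xlogx u = 0) (at_left 0)"
      by (auto simp: eventually_at_left_field xlogx_def intro!: exI[of _ "-1"])
    then have "(xlogx \<longlongrightarrow> 0) (at_left 0)" by (rule tendsto_eventually)
    moreover have "eventually (\<lambda>u. u * ln u = xlogx u) (at_right 0)"
      by (auto simp: eventually_at_right_field xlogx_def intro!: exI[of _ 1])
    then have "(xlogx \<longlongrightarrow> 0) (at_right 0)" by (rule tendsto_cong[THEN iffD1]) real_asymp
    ultimately show ?thesis using 2 by (simp add: isCont_def filterlim_at_split xlogx_def)
  next
    case 3
    have "eventually (\<lambda>u. u * ln u = xlogx u) (nhds s)"
      using eventually_nhds_in_open[of "{0<..}" s] 3 by (auto elim!: eventually_mono simp: xlogx_def)
    moreover have "isCont (\<lambda>u. u * ln u) s" using 3 by (intro continuous_intros) auto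
    ultimately show ?thesis using isCont_cong[of "\<lambda>u. u * ln u" xlogx s] by simp
  qed
qed

lemma xlogx_nonpos: "0 \<le> s \<Longrightarrow> s \<le> 1 \<Longrightarrow> xlogx s \<le> 0"
  by (auto simp: xlogx_def mult_nonneg_nonpos)

lemma minus_xlogx_le_1:
  assumes "0 \<le> s" "s \<le> 1"
  shows "- xlogx s \<le> 1"
proof (cases "s = 0")
  case False
  then have s: "0 < s" using assms by simp
  have "- ln s \<le> 1 / s - 1" using ln_le_minus_one[of "1 / s"] s by (simp add: ln_div)
  then have "s * (- ln s) \<le> s * (1 / s - 1)" using s by (intro mult_left_mono) auto
  then show ?thesis using s by (simp add: xlogx_def algebra_simps)
qed (simp add: xlogx_def)

lemma Liminf_at_right_ge_of_perturbed_bound: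
  fixes g q m :: "real \<Rightarrow> real" and s C :: real
  assumes cont: "isCont g s" and C: "0 \<le> C"
    and q_nonneg: "\<And>\<epsilon>. 0 < \<epsilon> \<Longrightarrow> \<epsilon> < 1 \<Longrightarrow> 0 \<le> q \<epsilon>"
    and m_near: "\<And>\<epsilon>. 0 < \<epsilon> \<Longrightarrow> \<epsilon> < 1 \<Longrightarrow> \<bar>m \<epsilon> - s\<bar> \<le> \<epsilon> * q \<epsilon>"
    and bound: "\<And>\<epsilon>. 0 < \<epsilon> \<Longrightarrow> \<epsilon> < 1 \<Longrightarrow> g (m \<epsilon>) \<le> (1 + C * \<epsilon>) * q \<epsilon>"
  shows "ereal (g s) \<le> Liminf (at_right 0) (\<lambda>\<epsilon>. ereal (q \<epsilon>))"
proof (rule le_Liminf_iff[THEN iffD2], intro allI impI)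
  fix y assume y: "y < ereal (g s)"
  have small: "eventually (\<lambda>\<epsilon>. 0 < \<epsilon> \<and> \<epsilon> < 1) (at_right (0::real))"
    by (auto simp: eventually_at_right_field intro!: exI[of _ 1])
  show "eventually (\<lambda>\<epsilon>. y < ereal (q \<epsilon>)) (at_right 0)"
  proof (cases "y < 0")
    case True
    from small show ?thesis
      by eventually_elim (use True q_nonneg in \<open>auto intro: less_le_trans\<close>)
  next
    case False
    then obtain b where b: "y = ereal b" "0 \<le> b" "b < g s" using y by (cases y) auto
    define \<gamma> where "\<gamma> = (g s - b) / 2"
    have \<gamma>: "0 < \<gamma>" using b by (simp add: \<gamma>_def)
    obtain \<eta> where \<eta>: "0 < \<eta>" and near: "\<And>u. \<bar>u - s\<bar> < \<eta> \<Longrightarrow> g s - \<gamma> < g u"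
      using cont \<gamma> unfolding continuous_at_eps_delta dist_real_def by (force simp: abs_less_iff)
    have "((\<lambda>\<epsilon>. \<epsilon> * b) \<longlongrightarrow> 0) (at_right 0)" "((\<lambda>\<epsilon>. C * \<epsilon> * b) \<longlongrightarrow> 0) (at_right 0)"
      by (auto intro!: tendsto_eq_intros)
    with \<eta> \<gamma> have "eventually (\<lambda>\<epsilon>. \<epsilon> * b < \<eta> \<and> C * \<epsilon> * b < \<gamma>) (at_right 0)"
      by (intro eventually_conj order_tendstoD(2)) auto
    with small show ?thesis
    proof eventually_elim
      case (elim \<epsilon>)
      show ?case
      proof (rule ccontr)
        assume "\<not> y < ereal (q \<epsilon>)"
        then have qb: "q \<epsilon> \<le> b" using b by simp
        have "\<bar>m \<epsilon> - s\<bar> \<le> \<epsilon> * b"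
          using m_near[of \<epsilon>] mult_left_mono[OF qb, of \<epsilon>] elim by linarith
        then have "g s - \<gamma> < g (m \<epsilon>)" using elim by (intro near) auto
        also have "g (m \<epsilon>) \<le> (1 + C * \<epsilon>) * b"
          using bound[of \<epsilon>] mult_left_mono[OF qb, of "1 + C * \<epsilon>"] elim C by (simp add: order_trans)
        also have "\<dots> < b + \<gamma>" using elim by (simp add: algebra_simps)
        finally show False unfolding \<gamma>_def by argo
      qed
    qed
  qed
qed

section \<open>Chords and dilations\<close>

definition chord_measure :: "'a::euclidean_space set \<Rightarrow> 'a \<Rightarrow> 'a \<Rightarrow> real" where
  "chord_measure K x y = measure lborel {t\<in>{0..1}. (1 - t) *\<^sub>R x + t *\<^sub>R y \<in> K}"

lemma dilate_eq_chord_measure: "dilate K \<epsilon> = K \<union> {x. \<exists>y. 1 - \<epsilon> < chord_measure K x y}"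
proof -
  have "(LINT t:{0..1}|lborel. indicator K ((1 - t) *\<^sub>R x + t *\<^sub>R y)) = chord_measure K x y" for x y
  proof -
    have "(LINT t:{0..1}|lborel. indicator K ((1 - t) *\<^sub>R x + t *\<^sub>R y))
        = integral\<^sup>L lborel (indicator {t\<in>{0..1}. (1 - t) *\<^sub>R x + t *\<^sub>R y \<in> K})"
      unfolding set_lebesgue_integral_def
      by (intro Bochner_Integration.integral_cong) (auto split: split_indicator)
    also have "\<dots> = chord_measure K x y" by (simp add: chord_measure_def)
    finally show ?thesis .
  qed
  then show ?thesis by (simp add: dilate_def)
qed

lemma fmeasurable_subset_unit_interval:
  assumes "A \<in> sets lborel" "A \<subseteq> {0..(1::real)}"
  shows "A \<in> fmeasurable lborel"
  using assms fmeasurable_compact[of "{0..1::real}"] by (auto intro: fmeasurableI2)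

lemma fmeasurable_inner_compact:
  fixes T :: "'a::euclidean_space set"
  assumes T: "T \<in> fmeasurable lborel" "bounded T" and c: "c < measure lborel T"
  obtains C where "compact C" "C \<subseteq> T" "c < measure lborel C"
proof -
  have "T \<in> sets lebesgue" "0 < measure lborel T - c" using T c by (auto simp: fmeasurable_def)
  then obtain C where C: "closed C" "C \<subseteq> T" "emeasure lebesgue (T - C) < ennreal (measure lborel T - c)"
    by (rule sets_lebesgue_inner_closed) blast
  have "compact C" using C(1,2) bounded_subset[OF T(2)] by (simp add: compact_eq_bounded_closed)
  have "T - C \<in> fmeasurable lborel" using T(1) C(1) C(2) by (intro fmeasurable_Diff) auto
  then have "emeasure lebesgue (T - C) = ennreal (measure lborel (T - C))"
    by (simp add: fmeasurable_def emeasure_eq_measure2[symmetric])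
  then have "measure lborel (T - C) < measure lborel T - c" using C(3) by (simp add: ennreal_less_iff)
  moreover have "measure lborel (T - C) = measure lborel T - measure lborel C"
    using C T(1) by (intro measure_Diff) (auto simp: fmeasurable_def)
  ultimately show thesis using \<open>compact C\<close> C(2) by (intro that) auto
qed

lemma open_chord_measure_superlevel:
  fixes K :: "'a::euclidean_space set"
  assumes "open K"
  shows "open {x. \<exists>y. c < chord_measure K x y}"
proof (unfold open_dist, intro ballI)
  fix x assume "x \<in> {x. \<exists>y. c < chord_measure K x y}"
  then obtain y where y: "c < chord_measure K x y" by auto
  define z where "z x' t = (1 - t) *\<^sub>R x' + t *\<^sub>R y" for x' t
  define T where "T x' = {t\<in>{0..1}. z x' t \<in> K}" for x'
  have cont_z: "continuous_on UNIV (z x')" for x' unfolding z_def by (intro continuous_intros)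
  have T_fmeas: "T x' \<in> fmeasurable lborel" for x'
  proof -
    have "open (z x' -` K)" using assms cont_z by (simp add: open_vimage)
    then have "T x' = {0..1} \<inter> z x' -` K" "z x' -` K \<in> sets lborel" by (auto simp: T_def)
    then show ?thesis by (intro fmeasurable_subset_unit_interval) auto
  qed
  have "bounded (T x)" by (rule bounded_subset[of "{0..1}"]) (auto simp: T_def)
  moreover have "c < measure lborel (T x)" using y by (simp add: chord_measure_def T_def z_def)
  ultimately obtain C where C: "compact C" "C \<subseteq> T x" "c < measure lborel C"
    using T_fmeas fmeasurable_inner_compact by metis
  \<comment> \<open>The chord pieces indexed by \<open>C\<close> form a compact subset of \<open>K\<close>, hence keep a margin \<open>d\<close> from \<open>- K\<close>.\<close>
  have "compact (z x ` C)" using C(1) by (metis compact_continuous_image continuous_on_subset cont_z subset_UNIV)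
  moreover have "z x ` C \<inter> - K = {}" using C(2) by (auto simp: T_def)
  ultimately have "\<exists>d>0. \<forall>a\<in>z x ` C. \<forall>b\<in>- K. d \<le> dist a b"
    using assms by (intro separate_compact_closed) auto
  then obtain d where d: "0 < d" "\<And>a b. a \<in> z x ` C \<Longrightarrow> b \<notin> K \<Longrightarrow> d \<le> dist a b"
    by auto
  show "\<exists>e>0. \<forall>x'. dist x' x < e \<longrightarrow> x' \<in> {x. \<exists>y. c < chord_measure K x y}"
  proof (intro exI[of _ d] conjI allI impI)
    fix x' assume x': "dist x' x < d"
    have "C \<subseteq> T x'"
    proof
      fix t assume t: "t \<in> C"
      then have t01: "0 \<le> t" "t \<le> 1" using C(2) by (auto simp: T_def)
      have "z x' t - z x t = (1 - t) *\<^sub>R (x' - x)" by (simp add: z_def algebra_simps)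
      then have "dist (z x' t) (z x t) = \<bar>1 - t\<bar> * dist x' x" by (simp add: dist_norm)
      also have "\<dots> < d" using t01 x' d(1) by (smt (verit) mult_left_le_one_le zero_le_dist)
      finally have "z x' t \<in> K" using d(2)[of "z x t" "z x' t"] t by (auto simp: dist_commute)
      then show "t \<in> T x'" using t01 by (simp add: T_def)
    qed
    then have "measure lborel C \<le> measure lborel (T x')"
      using C(1) T_fmeas[of x'] by (intro measure_mono_fmeasurable) (auto simp: borel_compact)
    then have "measure lborel C \<le> chord_measure K x' y" by (simp add: chord_measure_def T_def z_def)
    then have "c < chord_measure K x' y" using C(3) by linarith
    then show "x' \<in> {x. \<exists>y. c < chord_measure K x y}" by blast
  qed (use d in auto)
qed

lemma open_dilate: "open K \<Longrightarrow> open (dilate K \<epsilon>)"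
  unfolding dilate_eq_chord_measure by (intro open_Un open_chord_measure_superlevel)

lemma subset_dilate: "K \<subseteq> dilate K \<epsilon>"
  by (auto simp: dilate_def)

section \<open>The Minkowski gauge\<close>

locale sym_convex_open_nbhd =
  fixes K :: "'a::euclidean_space set" and r :: real
  assumes open_K: "open K" and convex_K: "convex K" and uminus_mem: "\<And>x. x \<in> K \<Longrightarrow> - x \<in> K"
    and r_pos: "0 < r" and ball_subset: "ball 0 r \<subseteq> K"
begin

definition minkowski :: "'a \<Rightarrow> real" where
  "minkowski x = Inf {t. 0 < t \<and> x /\<^sub>R t \<in> K}"

lemma zero_mem: "0 \<in> K"
  using ball_subset r_pos by auto

lemma divide_mem_mono:
  assumes "0 < t" "x /\<^sub>R t \<in> K" "t \<le> t'"
  shows "x /\<^sub>R t' \<in> K"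
proof -
  have "x /\<^sub>R t' = (t / t') *\<^sub>R (x /\<^sub>R t) + (1 - t / t') *\<^sub>R 0"
    using assms by (simp add: field_simps)
  also have "\<dots> \<in> K"
    by (rule convexD[OF convex_K assms(2) zero_mem]) (use assms in auto)
  finally show ?thesis .
qed

lemma divide_mem_if_large:
  assumes "norm x / r < t"
  shows "x /\<^sub>R t \<in> K"
proof -
  have t: "0 < t" using assms r_pos by (smt (verit) divide_nonneg_pos norm_ge_zero)
  have "norm (x /\<^sub>R t) < r" using assms t r_pos by (simp add: field_simps)
  then show ?thesis using ball_subset by auto
qed

lemma divide_mem_smaller:
  assumes "0 < t" "x /\<^sub>R t \<in> K"
  obtains t' where "0 < t'" "t' < t" "x /\<^sub>R t' \<in> K"
proof -
  have "open ({0<..} \<inter> (\<lambda>s. x /\<^sub>R s) -` K)"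
    by (intro continuous_open_preimage open_K) (auto intro!: continuous_intros)
  then obtain e where e: "0 < e" "ball t e \<subseteq> {0<..} \<inter> (\<lambda>s. x /\<^sub>R s) -` K"
    using assms open_contains_ball by blast
  have "t - min e t / 2 \<in> ball t e" using e(1) assms(1) by (simp add: dist_real_def)
  then have "x /\<^sub>R (t - min e t / 2) \<in> K" using e(2) by blast
  then show thesis using e(1) assms(1) by (intro that) auto
qed

lemma rescalings_nonempty: "{t. 0 < t \<and> x /\<^sub>R t \<in> K} \<noteq> {}"
proof -
  have "0 < norm x / r + 1" using r_pos by (simp add: add_nonneg_pos)
  then show ?thesis using divide_mem_if_large[of x "norm x / r + 1"] by auto
qed

lemma minkowski_less_iff:
  assumes "0 < t"
  shows "minkowski x < t \<longleftrightarrow> x /\<^sub>R t \<in> K"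
proof -
  have bdd: "bdd_below {t. 0 < t \<and> x /\<^sub>R t \<in> K}" by (auto intro: bdd_belowI[of _ 0])
  show ?thesis
  proof
    assume "minkowski x < t"
    then obtain s where "0 < s" "x /\<^sub>R s \<in> K" "s < t"
      using cInf_less_iff[OF rescalings_nonempty bdd] unfolding minkowski_def by blast
    then show "x /\<^sub>R t \<in> K" using divide_mem_mono by auto
  next
    assume "x /\<^sub>R t \<in> K"
    then obtain t' where "0 < t'" "t' < t" "x /\<^sub>R t' \<in> K" using divide_mem_smaller assms by blast
    then have "minkowski x \<le> t'" unfolding minkowski_def by (intro cInf_lower bdd) auto
    then show "minkowski x < t" using \<open>t' < t\<close> by simp
  qed
qed

lemma minkowski_nonneg: "0 \<le> minkowski x"
  unfolding minkowski_def by (rule cInf_greatest[OF rescalings_nonempty]) auto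

lemma mem_iff_minkowski_less_1: "x \<in> K \<longleftrightarrow> minkowski x < 1"
  using minkowski_less_iff[of 1 x] by simp

lemma minkowski_scaleR_pos:
  assumes "0 < c"
  shows "minkowski (c *\<^sub>R x) = c * minkowski x"
proof (rule eq_if_same_strict_upper_bounds)
  fix t :: real assume t: "0 < t"
  have "(c *\<^sub>R x) /\<^sub>R t = x /\<^sub>R (t / c)" by (simp add: divide_inverse mult.commute)
  then show "minkowski (c *\<^sub>R x) < t \<longleftrightarrow> c * minkowski x < t"
    using minkowski_less_iff[OF t, of "c *\<^sub>R x"] minkowski_less_iff[of "t / c" x] t assms
    by (simp add: field_simps)
qed (use assms minkowski_nonneg in auto)

lemma minkowski_0: "minkowski 0 = 0"
  by (rule eq_if_same_strict_upper_bounds) (use minkowski_less_iff zero_mem minkowski_nonneg in auto)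

lemma minkowski_uminus: "minkowski (- x) = minkowski x"
proof (rule eq_if_same_strict_upper_bounds)
  fix t :: real assume t: "0 < t"
  have "(- x) /\<^sub>R t \<in> K \<longleftrightarrow> x /\<^sub>R t \<in> K" using uminus_mem[of "x /\<^sub>R t"] uminus_mem[of "(- x) /\<^sub>R t"] by auto
  then show "minkowski (- x) < t \<longleftrightarrow> minkowski x < t" using minkowski_less_iff[OF t] by blast
qed (use minkowski_nonneg in auto)

lemma minkowski_scaleR: "minkowski (c *\<^sub>R x) = \<bar>c\<bar> * minkowski x"
proof -
  consider "0 < c" | "c = 0" | "c < 0" by linarith
  then show ?thesis
  proof cases
    case 3
    then have "minkowski (c *\<^sub>R x) = (- c) * minkowski (- x)" using minkowski_scaleR_pos[of "- c" "- x"] by simp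
    then show ?thesis using 3 minkowski_uminus by simp
  qed (auto simp: minkowski_scaleR_pos minkowski_0)
qed

lemma minkowski_triangle: "minkowski (x + y) \<le> minkowski x + minkowski y"
proof (rule dense_ge)
  fix s assume s: "minkowski x + minkowski y < s"
  define d where "d = (s - minkowski x - minkowski y) / 2"
  define a where "a = minkowski x + d"
  define b where "b = minkowski y + d"
  have "0 < d" using s by (simp add: d_def)
  then have "minkowski x < a" "minkowski y < b" "0 < a" "0 < b"
    using minkowski_nonneg[of x] minkowski_nonneg[of y] by (simp_all add: a_def b_def add_nonneg_pos)
  then have a: "0 < a" "x /\<^sub>R a \<in> K" and b: "0 < b" "y /\<^sub>R b \<in> K"
    using minkowski_less_iff by auto
  have "(x + y) /\<^sub>R (a + b) = (a / (a + b)) *\<^sub>R (x /\<^sub>R a) + (b / (a + b)) *\<^sub>R (y /\<^sub>R b)"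
    using a b by (simp add: scaleR_add_right inverse_eq_divide)
  also have "\<dots> \<in> K"
    by (rule convexD[OF convex_K a(2) b(2)]) (use a b in \<open>auto simp: add_divide_distrib[symmetric]\<close>)
  finally have "minkowski (x + y) < a + b" using minkowski_less_iff[of "a + b" "x + y"] a b by simp
  then show "minkowski (x + y) \<le> s" by (simp add: a_def b_def d_def)
qed

lemma minkowski_le_norm: "minkowski x \<le> norm x / r"
proof (rule dense_ge)
  fix t assume t: "norm x / r < t"
  have "0 \<le> norm x / r" using r_pos by simp
  then have "0 < t" using t by linarith
  then show "minkowski x \<le> t" using minkowski_less_iff[of t x] divide_mem_if_large[OF t] by simp
qed

lemma lipschitz_minkowski: "(1 / r)-lipschitz_on UNIV minkowski"
proof (rule lipschitz_onI)
  fix x y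
  have "minkowski x \<le> minkowski y + minkowski (x - y)" "minkowski y \<le> minkowski x + minkowski (x - y)"
    using minkowski_triangle[of y "x - y"] minkowski_triangle[of x "y - x"] minkowski_uminus[of "x - y"] by auto
  then show "dist (minkowski x) (minkowski y) \<le> 1 / r * dist x y"
    using minkowski_le_norm[of "x - y"] by (simp add: dist_real_def dist_norm)
qed (use r_pos in simp)

lemma borel_measurable_minkowski[measurable]: "minkowski \<in> borel_measurable borel"
  using lipschitz_on_continuous_on[OF lipschitz_minkowski] by (rule borel_measurable_continuous_onI)

lemma minkowski_convex_le_max:
  assumes "0 \<le> u" "u \<le> 1"
  shows "minkowski (u *\<^sub>R x + (1 - u) *\<^sub>R y) \<le> max (minkowski x) (minkowski y)"
proof -
  have "minkowski (u *\<^sub>R x + (1 - u) *\<^sub>R y) \<le> u * minkowski x + (1 - u) * minkowski y"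
    using minkowski_triangle[of "u *\<^sub>R x" "(1 - u) *\<^sub>R y"] assms by (simp add: minkowski_scaleR)
  also have "\<dots> \<le> u * max (minkowski x) (minkowski y) + (1 - u) * max (minkowski x) (minkowski y)"
    using assms by (intro add_mono mult_left_mono) auto
  finally show ?thesis by (simp add: algebra_simps)
qed

lemma mem_dilate_if_minkowski_le:
  assumes "0 < \<epsilon>" "\<epsilon> < 1" "minkowski x \<le> 1 + 2 * \<epsilon>"
  shows "x \<in> dilate K \<epsilon>"
proof (cases "minkowski x < 1")
  case True
  then show ?thesis by (simp add: dilate_def mem_iff_minkowski_less_1)
next
  case False
  define R where "R = minkowski x"
  have R: "1 \<le> R" "R \<le> 1 + 2 * \<epsilon>" using False assms(3) by (auto simp: R_def)
  define y where "y = (- 1 / R) *\<^sub>R x"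
  have chord: "{t\<in>{0..1}. (1 - t) *\<^sub>R x + t *\<^sub>R y \<in> K} = {(R - 1) / (R + 1)<..<1}"
  proof -
    have minkowski_chord: "minkowski ((1 - t) *\<^sub>R x + t *\<^sub>R y) = \<bar>R - t * (R + 1)\<bar>" for t
    proof -
      have "(1 - t) *\<^sub>R x + t *\<^sub>R y = ((1 - t) + t * (- 1 / R)) *\<^sub>R x"
        by (simp add: y_def scaleR_diff_left)
      also have "(1 - t) + t * (- 1 / R) = (R - t * (R + 1)) / R" using R by (simp add: field_simps)
      finally show ?thesis using R by (simp add: minkowski_scaleR R_def)
    qed
    have chord_iff: "\<bar>R - t * (R + 1)\<bar> < 1 \<longleftrightarrow> (R - 1) / (R + 1) < t \<and> t < 1" for t
    proof -
      have "(R - 1) / (R + 1) < t \<longleftrightarrow> R - 1 < t * (R + 1)" using R by (simp add: pos_divide_less_eq)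
      moreover have "t < 1 \<longleftrightarrow> t * (R + 1) < R + 1" using R by simp
      ultimately show ?thesis unfolding abs_less_iff by linarith
    qed
    have "0 \<le> (R - 1) / (R + 1)" using R by simp
    then show ?thesis
      unfolding set_eq_iff mem_Collect_eq atLeastAtMost_iff greaterThanLessThan_iff
        mem_iff_minkowski_less_1 minkowski_chord chord_iff by auto
  qed
  have "1 - \<epsilon> < 2 / (R + 1)"
  proof -
    have "(1 - \<epsilon>) * (R + 1) \<le> (1 - \<epsilon>) * (2 + 2 * \<epsilon>)" using R assms by (intro mult_left_mono) auto
    also have "\<dots> < 2" using assms by (simp add: algebra_simps)
    finally show ?thesis using R by (simp add: pos_less_divide_eq)
  qed
  also have "2 / (R + 1) = 1 - (R - 1) / (R + 1)"
    using R by (simp add: field_simps)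
  also have "\<dots> = chord_measure K x y"
    using R unfolding chord_measure_def chord by simp
  finally show ?thesis unfolding dilate_eq_chord_measure by blast
qed

lemma convex_sublevel_comp_minkowski:
  fixes h :: "real \<Rightarrow> real"
  assumes "mono h" "convex \<Omega>"
  shows "convex {x \<in> \<Omega>. h (minkowski x) < l}"
proof (rule convexI)
  fix x y and u v :: real
  assume x: "x \<in> {x \<in> \<Omega>. h (minkowski x) < l}" and y: "y \<in> {x \<in> \<Omega>. h (minkowski x) < l}"
    and uv: "0 \<le> u" "0 \<le> v" "u + v = 1"
  have "u *\<^sub>R x + v *\<^sub>R y \<in> \<Omega>" using x y uv assms(2) by (auto intro: convexD)
  moreover have "v = 1 - u" using uv by simp
  then have "minkowski (u *\<^sub>R x + v *\<^sub>R y) \<le> max (minkowski x) (minkowski y)"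
    using minkowski_convex_le_max[of u x y] uv by (simp only:)
  then have "h (minkowski (u *\<^sub>R x + v *\<^sub>R y)) \<le> max (h (minkowski x)) (h (minkowski y))"
    using assms(1) by (metis max_of_mono monoD)
  ultimately show "u *\<^sub>R x + v *\<^sub>R y \<in> {x \<in> \<Omega>. h (minkowski x) < l}" using x y by auto
qed

lemma quotient_comp_minkowski_le:
  assumes h: "c-lipschitz_on UNIV h" and \<epsilon>: "0 < \<epsilon>" "\<epsilon> < 1"
  shows "(h (minkowski x) - h (minkowski (((1 - \<epsilon>) / (1 + \<epsilon>)) *\<^sub>R x))) / \<epsilon> \<le> 2 * c * minkowski x"
proof -
  define s where "s = (1 - \<epsilon>) / (1 + \<epsilon>)"
  have s: "0 < s" "s \<le> 1" "1 - s \<le> 2 * \<epsilon>" using \<epsilon> by (auto simp: s_def field_simps)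
  have "h (minkowski x) - h (minkowski (s *\<^sub>R x)) \<le> dist (h (minkowski x)) (h (s * minkowski x))"
    using s by (simp add: minkowski_scaleR dist_real_def)
  also have "\<dots> \<le> c * dist (minkowski x) (s * minkowski x)"
    using h by (rule lipschitz_onD) auto
  also have "\<dots> = c * ((1 - s) * minkowski x)"
    using s minkowski_nonneg[of x] by (simp add: dist_real_def algebra_simps mult_left_le_one_le)
  also have "\<dots> \<le> c * (2 * \<epsilon> * minkowski x)"
    using s lipschitz_on_nonneg[OF h] minkowski_nonneg[of x] by (intro mult_left_mono mult_right_mono) auto
  finally show ?thesis using \<epsilon> by (simp add: s_def pos_divide_le_eq algebra_simps)
qed

end

section \<open>Testing the entropy inequality\<close>

definition ramp :: "real \<Rightarrow> real \<Rightarrow> real" where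
  "ramp \<delta> u = min 1 (max 0 ((u - 1) / (2 * \<delta>)))"

lemma ramp_nonneg: "0 \<le> ramp \<delta> u"
  and ramp_le_1: "ramp \<delta> u \<le> 1"
  by (auto simp: ramp_def)

lemma ramp_eq_0: "u \<le> 1 \<Longrightarrow> 0 < \<delta> \<Longrightarrow> ramp \<delta> u = 0"
  by (simp add: ramp_def divide_nonpos_pos)

lemma ramp_eq_1: "1 + 2 * \<delta> \<le> u \<Longrightarrow> 0 < \<delta> \<Longrightarrow> ramp \<delta> u = 1"
  by (simp add: ramp_def pos_le_divide_eq)

lemma mono_ramp:
  assumes "0 < \<delta>"
  shows "mono (ramp \<delta>)"
proof (rule monoI)
  fix u v :: real assume "u \<le> v"
  then have "(u - 1) / (2 * \<delta>) \<le> (v - 1) / (2 * \<delta>)" using assms by (intro divide_right_mono) auto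
  then show "ramp \<delta> u \<le> ramp \<delta> v" by (auto simp: ramp_def min_def max_def)
qed

lemma lipschitz_ramp:
  assumes "0 < \<delta>"
  shows "(1 / (2 * \<delta>))-lipschitz_on UNIV (ramp \<delta>)"
proof (rule lipschitz_onI)
  fix u v :: real
  have "\<bar>min 1 (max 0 a) - min 1 (max 0 b)\<bar> \<le> \<bar>a - b\<bar>" for a b :: real
    by (auto simp: min_def max_def)
  then have "dist (ramp \<delta> u) (ramp \<delta> v) \<le> \<bar>(u - 1) / (2 * \<delta>) - (v - 1) / (2 * \<delta>)\<bar>"
    unfolding ramp_def dist_real_def by blast
  also have "\<dots> = 1 / (2 * \<delta>) * dist u v"
    using assms by (simp add: dist_real_def flip: diff_divide_distrib)
  finally show "dist (ramp \<delta> u) (ramp \<delta> v) \<le> 1 / (2 * \<delta>) * dist u v" .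
qed (use assms in simp)

locale dilation_setting = sym_convex_open_nbhd K r for K :: "'a::euclidean_space set" and r +
  fixes \<mu> :: "'a measure" and \<Omega> :: "'a set"
  assumes prob_space_\<mu>: "prob_space \<mu>" and sets_\<mu>: "sets \<mu> = sets borel"
    and K_subset: "K \<subseteq> \<Omega>" and open_\<Omega>: "open \<Omega>" and convex_\<Omega>: "convex \<Omega>"
    and measure_\<Omega>: "measure \<mu> \<Omega> = 1" and integrable_norm: "integrable \<mu> norm"
begin

interpretation P: prob_space \<mu> by (rule prob_space_\<mu>)

lemma measurable_\<mu>: "f \<in> borel_measurable borel \<Longrightarrow> f \<in> borel_measurable \<mu>"
  by (simp add: measurable_cong_sets[OF sets_\<mu> refl])

lemma sets_\<mu>_borel: "A \<in> sets borel \<Longrightarrow> A \<in> sets \<mu>"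
  by (simp add: sets_\<mu>)

lemma integrable_minkowski: "integrable \<mu> minkowski"
proof (rule Bochner_Integration.integrable_bound)
  show "integrable \<mu> (\<lambda>x. norm x / r)" using integrable_norm by simp
  show "minkowski \<in> borel_measurable \<mu>" by (intro measurable_\<mu>) measurable
  show "AE x in \<mu>. norm (minkowski x) \<le> norm (norm x / r)"
    using r_pos minkowski_nonneg minkowski_le_norm by (intro AE_I2) simp
qed

lemma comp_minkowski_in_QC1:
  assumes mono: "mono h" and lip: "c-lipschitz_on UNIV h" and bounds: "\<And>u. 0 \<le> h u" "\<And>u. h u \<le> 1"
  shows "(\<lambda>x. h (minkowski x)) \<in> QC1 \<Omega> \<mu>"
proof -
  have cont: "continuous_on UNIV (\<lambda>x. h (minkowski x))"
    by (rule continuous_on_compose2[OF lipschitz_on_continuous_on[OF lip]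
          lipschitz_on_continuous_on[OF lipschitz_minkowski]]) auto
  have c: "0 \<le> c" using lip by (rule lipschitz_on_nonneg)
  have "integrable \<mu> (\<lambda>x. 2 * c * minkowski x)" using integrable_minkowski by simp
  moreover have "0 \<le> 2 * c * minkowski x" for x using c minkowski_nonneg[of x] by simp
  moreover have "(h (minkowski x) - h (minkowski (((1 - \<epsilon>) / (1 + \<epsilon>)) *\<^sub>R x))) / \<epsilon> \<le> 2 * c * minkowski x"
    if "\<epsilon> \<in> {0<..<1}" for x \<epsilon> using quotient_comp_minkowski_le[OF lip] that by auto
  ultimately have "\<exists>g \<epsilon>0. g \<in> borel_measurable borel \<and> (\<forall>x. 0 \<le> g x) \<and> integrable \<mu> g \<and> 0 < \<epsilon>0 \<and> \<epsilon>0 \<le> 1 \<and>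
      (\<forall>x\<in>\<Omega>. \<forall>\<epsilon>\<in>{0<..<\<epsilon>0}. (h (minkowski x) - h (minkowski (((1 - \<epsilon>) / (1 + \<epsilon>)) *\<^sub>R x))) / \<epsilon> \<le> g x)"
    by (intro exI[of _ "\<lambda>x. 2 * c * minkowski x"] exI[of _ 1]) auto
  moreover have "set_integrable \<mu> \<Omega> (\<lambda>x. h (minkowski x))"
    unfolding set_integrable_def
  proof (rule Bochner_Integration.integrable_bound)
    show "integrable \<mu> (\<lambda>x. 1::real)" by simp
    show "(\<lambda>x. indicator \<Omega> x *\<^sub>R h (minkowski x)) \<in> borel_measurable \<mu>"
      using open_\<Omega> borel_measurable_continuous_onI[OF cont] by (intro measurable_\<mu>) measurable
    show "AE x in \<mu>. norm (indicator \<Omega> x *\<^sub>R h (minkowski x)) \<le> norm (1::real)"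
      using bounds by (intro AE_I2) (auto split: split_indicator)
  qed
  ultimately show ?thesis
    using continuous_on_subset[OF cont] convex_sublevel_comp_minkowski[OF mono convex_\<Omega>] bounds
    by (simp add: QC1_def QC_def minkowski_uminus)
qed

definition cutoff :: "real \<Rightarrow> 'a \<Rightarrow> real" where
  "cutoff \<delta> x = ramp \<delta> (minkowski x)"

definition shell :: "real \<Rightarrow> 'a set" where
  "shell \<delta> = {x. 1 < minkowski x \<and> minkowski x \<le> 1 + 2 * \<delta>}"

definition dilation_gain :: "real \<Rightarrow> real" where
  "dilation_gain \<epsilon> = measure \<mu> (dilate K \<epsilon>) - measure \<mu> K"

definition cutoff_mean :: "real \<Rightarrow> real" where
  "cutoff_mean \<delta> = (LINT x:\<Omega>|\<mu>. cutoff \<delta> x)"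

lemma cutoff_in_QC1: "0 < \<delta> \<Longrightarrow> cutoff \<delta> \<in> QC1 \<Omega> \<mu>"
  unfolding cutoff_def
  by (intro comp_minkowski_in_QC1[OF mono_ramp lipschitz_ramp] ramp_nonneg ramp_le_1)

lemma cutoff_bounds: "0 \<le> cutoff \<delta> x" "cutoff \<delta> x \<le> 1"
  by (simp_all add: cutoff_def ramp_nonneg ramp_le_1)

lemma K_in_sets: "K \<in> sets \<mu>" and \<Omega>_in_sets: "\<Omega> \<in> sets \<mu>"
  and dilate_in_sets: "dilate K \<epsilon> \<in> sets \<mu>" and shell_in_sets: "shell \<delta> \<in> sets \<mu>"
  using open_K open_\<Omega> open_dilate[OF open_K] by (auto intro!: sets_\<mu>_borel simp: shell_def)

lemma measure_diff_dilate: "measure \<mu> (dilate K \<epsilon> - K) = dilation_gain \<epsilon>"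
  unfolding dilation_gain_def
  using dilate_in_sets K_in_sets subset_dilate by (rule P.finite_measure_Diff)

lemma dilation_gain_nonneg: "0 \<le> dilation_gain \<epsilon>"
  using measure_diff_dilate by (metis measure_nonneg)

lemma measure_shell_le_gain:
  assumes "0 < \<delta>" "\<delta> < 1"
  shows "measure \<mu> (shell \<delta>) \<le> dilation_gain \<delta>"
proof -
  have "shell \<delta> \<subseteq> dilate K \<delta> - K"
    using mem_dilate_if_minkowski_le[OF assms] by (auto simp: shell_def mem_iff_minkowski_less_1)
  then show ?thesis
    unfolding measure_diff_dilate[symmetric] using dilate_in_sets K_in_sets
    by (intro P.finite_measure_mono) auto
qed

lemma Phi_cutoff_le:
  assumes \<delta>: "0 < \<delta>" "\<delta> < 1"
  shows "Phi (cutoff \<delta>) x \<le> ereal ((1 + 2 * \<delta>) / \<delta> * indicator (shell \<delta>) x)"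
  unfolding Phi_def
proof (rule Limsup_bounded)
  let ?q = "\<lambda>\<epsilon>. (cutoff \<delta> x - cutoff \<delta> (((1 - \<epsilon>) / (1 + \<epsilon>)) *\<^sub>R x)) / \<epsilon>"
  have small: "eventually (\<lambda>\<epsilon>::real. 0 < \<epsilon> \<and> \<epsilon> < 1) (at_right 0)"
    by (auto simp: eventually_at_right_field intro!: exI[of _ 1])
  consider "minkowski x \<le> 1" | "1 + 2 * \<delta> < minkowski x" | "x \<in> shell \<delta>"
    by (force simp: shell_def)
  then show "eventually (\<lambda>\<epsilon>. ereal (?q \<epsilon>) \<le> ereal ((1 + 2 * \<delta>) / \<delta> * indicator (shell \<delta>) x)) (at_right 0)"
  proof cases
    case 1
    then have "x \<notin> shell \<delta>" "cutoff \<delta> x = 0" using \<delta> by (auto simp: shell_def cutoff_def ramp_eq_0)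
    from small show ?thesis
      by eventually_elim (use \<open>x \<notin> shell \<delta>\<close> \<open>cutoff \<delta> x = 0\<close> cutoff_bounds in \<open>auto simp: divide_nonpos_pos\<close>)
  next
    case 2
    then have "x \<notin> shell \<delta>" "cutoff \<delta> x = 1" using \<delta> by (auto simp: shell_def cutoff_def ramp_eq_1)
    have "((\<lambda>\<epsilon>. (1 - \<epsilon>) / (1 + \<epsilon>) * minkowski x) \<longlongrightarrow> minkowski x) (at_right 0)"
      by (auto intro!: tendsto_eq_intros)
    then have "eventually (\<lambda>\<epsilon>. 1 + 2 * \<delta> < (1 - \<epsilon>) / (1 + \<epsilon>) * minkowski x) (at_right 0)"
      using 2 by (rule order_tendstoD)
    with small show ?thesis
    proof eventually_elim
      case (elim \<epsilon>)
      then have "0 < (1 - \<epsilon>) / (1 + \<epsilon>)" by simp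
      then have "cutoff \<delta> (((1 - \<epsilon>) / (1 + \<epsilon>)) *\<^sub>R x) = 1"
        using elim \<delta> by (simp add: cutoff_def minkowski_scaleR ramp_eq_1)
      then show ?case using \<open>x \<notin> shell \<delta>\<close> \<open>cutoff \<delta> x = 1\<close> by simp
    qed
  next
    case 3
    from small show ?thesis
    proof eventually_elim
      case (elim \<epsilon>)
      have "?q \<epsilon> \<le> 2 * (1 / (2 * \<delta>)) * minkowski x"
        unfolding cutoff_def using quotient_comp_minkowski_le[OF lipschitz_ramp[OF \<delta>(1)]] elim by auto
      also have "\<dots> \<le> (1 + 2 * \<delta>) / \<delta>" using 3 \<delta> by (simp add: shell_def divide_right_mono)
      finally show ?case using 3 by simp
    qed
  qed
qed

lemma nn_integral_Phi_cutoff_le: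
  assumes \<delta>: "0 < \<delta>" "\<delta> < 1"
  shows "(\<integral>\<^sup>+x\<in>\<Omega>. e2ennreal (Phi (cutoff \<delta>) x) \<partial>\<mu>) \<le> ennreal ((1 + 2 * \<delta>) / \<delta> * dilation_gain \<delta>)"
proof -
  define c where "c = (1 + 2 * \<delta>) / \<delta>"
  have c: "0 \<le> c" using \<delta> by (simp add: c_def)
  have "(\<integral>\<^sup>+x\<in>\<Omega>. e2ennreal (Phi (cutoff \<delta>) x) \<partial>\<mu>) \<le> (\<integral>\<^sup>+x. ennreal c * indicator (shell \<delta>) x \<partial>\<mu>)"
  proof (rule nn_integral_mono)
    fix x
    have "e2ennreal (Phi (cutoff \<delta>) x) * indicator \<Omega> x \<le> e2ennreal (Phi (cutoff \<delta>) x)"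
      by (auto split: split_indicator)
    also have "\<dots> \<le> e2ennreal (ereal (c * indicator (shell \<delta>) x))"
      unfolding c_def by (rule e2ennreal_mono[OF Phi_cutoff_le[OF \<delta>]])
    also have "\<dots> = ennreal c * indicator (shell \<delta>) x" by (auto split: split_indicator)
    finally show "e2ennreal (Phi (cutoff \<delta>) x) * indicator \<Omega> x \<le> ennreal c * indicator (shell \<delta>) x" .
  qed
  also have "\<dots> = ennreal (c * measure \<mu> (shell \<delta>))"
    using shell_in_sets c by (simp add: nn_integral_cmult_indicator P.emeasure_eq_measure ennreal_mult)
  also have "\<dots> \<le> ennreal (c * dilation_gain \<delta>)"
    using c measure_shell_le_gain[OF \<delta>] by (intro ennreal_leI mult_left_mono)
  finally show ?thesis unfolding c_def .
qed

lemma Ent_cutoff_ge: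
  assumes \<delta>: "0 < \<delta>" "\<delta> < 1"
  shows "ereal (- dilation_gain \<delta> - xlogx (cutoff_mean \<delta>)) \<le> Ent \<mu> \<Omega> (cutoff \<delta>)"
proof -
  have pos_part: "(\<integral>\<^sup>+x\<in>\<Omega>. ennreal (xlogx (cutoff \<delta> x)) \<partial>\<mu>) = 0"
    using cutoff_bounds xlogx_nonpos by (simp add: ennreal_neg)
  define N where "N = (\<integral>\<^sup>+x\<in>\<Omega>. ennreal (- xlogx (cutoff \<delta> x)) \<partial>\<mu>)"
  have "N \<le> (\<integral>\<^sup>+x. indicator (shell \<delta>) x \<partial>\<mu>)"
    unfolding N_def
  proof (rule nn_integral_mono)
    fix x
    have "ennreal (- xlogx (cutoff \<delta> x)) \<le> indicator (shell \<delta>) x"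
    proof (cases "x \<in> shell \<delta>")
      case True
      then show ?thesis using minus_xlogx_le_1[OF cutoff_bounds] by (simp add: ennreal_leI[of _ 1, simplified])
    next
      case False
      then have "cutoff \<delta> x = 0 \<or> cutoff \<delta> x = 1"
        using \<delta> by (auto simp: shell_def cutoff_def ramp_eq_0 ramp_eq_1)
      then show ?thesis by (auto simp: xlogx_def)
    qed
    then show "ennreal (- xlogx (cutoff \<delta> x)) * indicator \<Omega> x \<le> indicator (shell \<delta>) x"
      by (auto split: split_indicator)
  qed
  also have "\<dots> = ennreal (measure \<mu> (shell \<delta>))"
    using shell_in_sets by (simp add: P.emeasure_eq_measure)
  also have "\<dots> \<le> ennreal (dilation_gain \<delta>)" using measure_shell_le_gain[OF \<delta>] by (rule ennreal_leI)
  finally have N_le: "N \<le> ennreal (dilation_gain \<delta>)" .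
  define b where "b = enn2real N"
  have "N \<noteq> \<top>" using N_le by (metis ennreal_neq_top neq_top_trans)
  then have N_eq: "N = ennreal b" by (simp add: b_def ennreal_enn2real_if)
  have "Ent \<mu> \<Omega> (cutoff \<delta>) = ereal (- b - xlogx (cutoff_mean \<delta>))"
    unfolding Ent_def pos_part N_def[symmetric] N_eq cutoff_mean_def
    by (simp add: b_def zero_ennreal.rep_eq)
  moreover have "b \<le> dilation_gain \<delta>"
    using enn2real_mono[OF N_le] dilation_gain_nonneg by (simp add: b_def)
  ultimately show ?thesis by simp
qed

lemma minus_xlogx_cutoff_mean_le:
  assumes \<kappa>: "0 < \<kappa>" and \<delta>: "0 < \<delta>" "\<delta> < 1"
    and LSI: "\<forall>f \<in> QC1 \<Omega> \<mu>.
           Ent \<mu> \<Omega> f \<le> ereal (1 / \<kappa>) * enn2ereal (\<integral>\<^sup>+x\<in>\<Omega>. e2ennreal (Phi f x) \<partial>\<mu>)"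
  shows "- \<kappa> * xlogx (cutoff_mean \<delta>) \<le> (1 + (2 + \<kappa>) * \<delta>) * (dilation_gain \<delta> / \<delta>)"
proof -
  define I where "I = (\<integral>\<^sup>+x\<in>\<Omega>. e2ennreal (Phi (cutoff \<delta>) x) \<partial>\<mu>)"
  have I_le: "I \<le> ennreal ((1 + 2 * \<delta>) / \<delta> * dilation_gain \<delta>)"
    unfolding I_def by (rule nn_integral_Phi_cutoff_le[OF \<delta>])
  then have "I \<noteq> \<top>" by (metis ennreal_neq_top neq_top_trans)
  then have I_eq: "I = ennreal (enn2real I)" by (simp add: ennreal_enn2real_if)
  have "ereal (- dilation_gain \<delta> - xlogx (cutoff_mean \<delta>)) \<le> Ent \<mu> \<Omega> (cutoff \<delta>)"
    by (rule Ent_cutoff_ge[OF \<delta>])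
  also have "\<dots> \<le> ereal (1 / \<kappa>) * enn2ereal I"
    unfolding I_def using LSI cutoff_in_QC1[OF \<delta>(1)] by blast
  also have "\<dots> = ereal (enn2real I / \<kappa>)" by (subst I_eq) simp
  finally have "\<kappa> * (- dilation_gain \<delta> - xlogx (cutoff_mean \<delta>)) \<le> enn2real I"
    using \<kappa> by (simp add: field_simps)
  also have "enn2real I \<le> (1 + 2 * \<delta>) / \<delta> * dilation_gain \<delta>"
    using enn2real_mono[OF I_le] dilation_gain_nonneg \<delta> by simp
  also have "(1 + 2 * \<delta>) / \<delta> * dilation_gain \<delta>
      = (1 + (2 + \<kappa>) * \<delta>) * (dilation_gain \<delta> / \<delta>) - \<kappa> * dilation_gain \<delta>"
    using \<delta> by (simp add: field_simps)
  finally show ?thesis by (simp add: algebra_simps)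
qed

lemma set_integral_indicator_on_\<Omega>:
  assumes "B \<in> sets \<mu>"
  shows "set_integrable \<mu> \<Omega> (indicator B :: 'a \<Rightarrow> real)"
    and "(LINT x:\<Omega>|\<mu>. indicator B x) = measure \<mu> (\<Omega> \<inter> B)"
proof -
  have eq: "(\<lambda>x. indicator \<Omega> x *\<^sub>R (indicator B x :: real)) = indicator (\<Omega> \<inter> B)"
    by (auto split: split_indicator)
  have "\<Omega> \<inter> B \<in> sets \<mu>" using \<Omega>_in_sets assms by auto
  then show "set_integrable \<mu> \<Omega> (indicator B :: 'a \<Rightarrow> real)"
    unfolding set_integrable_def eq by (intro integrable_real_indicator) (auto simp: P.emeasure_eq_measure)
  show "(LINT x:\<Omega>|\<mu>. indicator B x) = measure \<mu> (\<Omega> \<inter> B)"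
    unfolding set_lebesgue_integral_def eq using sets_eq_imp_space_eq[OF sets_\<mu>] by simp
qed

lemma cutoff_mean_le: "0 < \<delta> \<Longrightarrow> cutoff_mean \<delta> \<le> 1 - measure \<mu> K"
proof -
  assume \<delta>: "0 < \<delta>"
  have compl: "- K \<in> sets \<mu>"
    using K_in_sets sets.compl_sets[of K \<mu>] sets_eq_imp_space_eq[OF sets_\<mu>] by (simp add: Compl_eq_Diff_UNIV)
  have "cutoff_mean \<delta> \<le> (LINT x:\<Omega>|\<mu>. indicator (- K) x)"
    unfolding cutoff_mean_def
  proof (rule set_integral_mono)
    show "set_integrable \<mu> \<Omega> (cutoff \<delta>)" using cutoff_in_QC1[OF \<delta>] by (simp add: QC1_def)
    show "set_integrable \<mu> \<Omega> (indicator (- K) :: 'a \<Rightarrow> real)" using compl by (rule set_integral_indicator_on_\<Omega>)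
    show "cutoff \<delta> x \<le> indicator (- K) x" for x
      using \<delta> cutoff_bounds[of \<delta> x] by (cases "x \<in> K") (simp_all add: cutoff_def ramp_eq_0 mem_iff_minkowski_less_1)
  qed
  also have "\<dots> = measure \<mu> (\<Omega> - K)"
    using set_integral_indicator_on_\<Omega>(2)[OF compl] by (simp add: Diff_eq)
  also have "\<dots> = 1 - measure \<mu> K"
    using P.finite_measure_Diff[OF \<Omega>_in_sets K_in_sets K_subset] measure_\<Omega> by simp
  finally show ?thesis .
qed

lemma cutoff_mean_ge:
  assumes \<delta>: "0 < \<delta>" "\<delta> < 1"
  shows "1 - measure \<mu> K - dilation_gain \<delta> \<le> cutoff_mean \<delta>"
proof -
  define B where "B = {x. 1 + 2 * \<delta> \<le> minkowski x}"
  have B: "B \<in> sets \<mu>" unfolding B_def by (intro sets_\<mu>_borel) measurable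
  have "measure \<mu> (\<Omega> \<inter> B) = (LINT x:\<Omega>|\<mu>. indicator B x)"
    using set_integral_indicator_on_\<Omega>(2)[OF B] by simp
  also have "\<dots> \<le> cutoff_mean \<delta>"
    unfolding cutoff_mean_def
  proof (rule set_integral_mono)
    show "set_integrable \<mu> \<Omega> (cutoff \<delta>)" using cutoff_in_QC1[OF \<delta>(1)] by (simp add: QC1_def)
    show "set_integrable \<mu> \<Omega> (indicator B :: 'a \<Rightarrow> real)" using B by (rule set_integral_indicator_on_\<Omega>)
    show "indicator B x \<le> cutoff \<delta> x" for x
      using \<delta> cutoff_bounds[of \<delta> x] by (cases "x \<in> B") (simp_all add: B_def cutoff_def ramp_eq_1)
  qed
  finally have "measure \<mu> (\<Omega> \<inter> B) \<le> cutoff_mean \<delta>" .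
  moreover have "measure \<mu> (\<Omega> - B) = 1 - measure \<mu> (\<Omega> \<inter> B)"
    using P.finite_measure_Diff'[OF \<Omega>_in_sets B] measure_\<Omega> by simp
  moreover have "\<Omega> - B \<subseteq> dilate K \<delta>"
  proof
    fix x assume "x \<in> \<Omega> - B"
    then have "minkowski x \<le> 1 + 2 * \<delta>" by (simp add: B_def)
    then show "x \<in> dilate K \<delta>" by (rule mem_dilate_if_minkowski_le[OF \<delta>])
  qed
  then have "measure \<mu> (\<Omega> - B) \<le> measure \<mu> (dilate K \<delta>)"
    using dilate_in_sets by (rule P.finite_measure_mono)
  ultimately show ?thesis unfolding dilation_gain_def by linarith
qed

lemma mu_star_ge:
  assumes \<kappa>: "0 < \<kappa>"
    and LSI: "\<forall>f \<in> QC1 \<Omega> \<mu>.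
           Ent \<mu> \<Omega> f \<le> ereal (1 / \<kappa>) * enn2ereal (\<integral>\<^sup>+x\<in>\<Omega>. e2ennreal (Phi f x) \<partial>\<mu>)"
  shows "ereal (- \<kappa> * xlogx (1 - measure \<mu> K)) \<le> mu_star \<mu> K"
proof -
  have "ereal (- \<kappa> * xlogx (1 - measure \<mu> K)) \<le> Liminf (at_right 0) (\<lambda>\<epsilon>. ereal (dilation_gain \<epsilon> / \<epsilon>))"
  proof (rule Liminf_at_right_ge_of_perturbed_bound[where g = "\<lambda>s. - \<kappa> * xlogx s"
        and s = "1 - measure \<mu> K" and m = cutoff_mean and C = "2 + \<kappa>"])
    show "isCont (\<lambda>s. - \<kappa> * xlogx s) (1 - measure \<mu> K)" by (intro continuous_intros isCont_xlogx)
    show "0 \<le> 2 + \<kappa>" using \<kappa> by simp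
    fix \<epsilon> :: real assume \<epsilon>: "0 < \<epsilon>" "\<epsilon> < 1"
    show "0 \<le> dilation_gain \<epsilon> / \<epsilon>" using dilation_gain_nonneg \<epsilon> by simp
    show "\<bar>cutoff_mean \<epsilon> - (1 - measure \<mu> K)\<bar> \<le> \<epsilon> * (dilation_gain \<epsilon> / \<epsilon>)"
      using cutoff_mean_le[OF \<epsilon>(1)] cutoff_mean_ge[OF \<epsilon>] \<epsilon> by (simp add: abs_le_iff)
    show "- \<kappa> * xlogx (cutoff_mean \<epsilon>) \<le> (1 + (2 + \<kappa>) * \<epsilon>) * (dilation_gain \<epsilon> / \<epsilon>)"
      by (rule minus_xlogx_cutoff_mean_le[OF \<kappa> \<epsilon> LSI])
  qed
  then show ?thesis by (simp add: mu_star_def dilation_gain_def)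
qed

end

lemma Ks_contains_ball:
  assumes "K \<in> Ks \<Omega>"
  obtains r where "0 < r" "ball 0 r \<subseteq> K"
proof -
  have K: "K \<noteq> {}" "open K" "convex K" "uminus ` K = K" using assms by (auto simp: Ks_def)
  then obtain a where a: "a \<in> K" "- a \<in> K" by force
  have "(1 / 2 :: real) *\<^sub>R a + (1 / 2 :: real) *\<^sub>R (- a) \<in> K" by (rule convexD[OF K(3) a]) auto
  then have "0 \<in> K" by simp
  then show thesis using K(2) open_contains_ball that by blast
qed

theorem theoremt:
  fixes \<mu> :: "'a::euclidean_space measure" and \<Omega> :: "'a set" and \<kappa> :: real
  assumes "prob_space \<mu>" and "sets \<mu> = sets borel"
    and "sym_convex_domain \<Omega>" and "measure \<mu> \<Omega> = 1"
    and "integrable \<mu> norm"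
    and "\<kappa> > 0"
    and "\<forall>f \<in> QC1 \<Omega> \<mu>.
           Ent \<mu> \<Omega> f \<le> ereal (1 / \<kappa>) * enn2ereal (\<integral>\<^sup>+x\<in>\<Omega>. e2ennreal (Phi f x) \<partial>\<mu>)"
  shows "dilation_ineq \<mu> \<Omega> \<kappa>"
  unfolding dilation_ineq_def
proof
  fix K assume K: "K \<in> Ks \<Omega>"
  then obtain r where r: "0 < r" "ball 0 r \<subseteq> K" by (rule Ks_contains_ball)
  have K_props: "K \<subseteq> \<Omega>" "open K" "convex K" "uminus ` K = K" using K by (auto simp: Ks_def)
  then have "- x \<in> K" if "x \<in> K" for x using that by force
  moreover have "open \<Omega>" "convex \<Omega>" using assms(3) by (auto simp: sym_convex_domain_def)
  ultimately interpret dilation_setting K r \<mu> \<Omega>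
    using K_props r assms(1,2,4,5)
    by (intro dilation_setting.intro sym_convex_open_nbhd.intro dilation_setting_axioms.intro) simp_all
  show "ereal (- \<kappa> * xlogx (1 - measure \<mu> K)) \<le> mu_star \<mu> K"
    using assms(6,7) by (rule mu_star_ge)
qed

end
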